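(* Let $\Gamma$ be a labeled graph with $V$ vertices and $E$ edges, let $k\ge0$ and let $D,C_1,\ldots,C_V$ be symbols. Then $$\big(\lambda_\Gamma(C_1,\ldots,C_V)\big)_{,\mu_1\ldots\mu_k}J^{\mu_1\nu_1}\cdots J^{\mu_k\nu_k}D_{,\nu_1\ldots\nu_k}=\sum_{\Gamma'}\lambda_{\Gamma'}(C_1,\ldots,C_V,D),$$ where the sum runs over all labeled graphs $\Gamma'$ with $V+1$ vertices and $E+k$ edges obtained from $\Gamma$ (keeping its vertex and edge labels) by adding a vertex labeled $V+1$ and $k$ edges labeled $E+1,\ldots,E+k$, each joining some vertex of $\Gamma$ to the vertex $V+1$.
   Context: Coordinates $z=(z^1,\ldots,z^{2N})=(x,p)$ on $T^*\mathbb{R}^N$, $(J^{\mu\nu})=\begin{pmatrix}0&I_N\\-I_N&0\end{pmatrix}$, $C_{,\mu_1\ldots\mu_k}$ denotes partial derivatives, repeated indices summed. A labeled graph with $V$ vertices and $E$ edges is a map $s:\{1,\ldots,E\}\to\mathcal{P}_2\{1,\ldots,V\}$ (edge $e$ joins the vertices in $s(e)$); an edge with $s(e)=\{i,j\}$, $i<j$, is oriented $i\to j$. $\lambda_\Gamma(C_1,\ldots,C_V)$: place $C_v$ at vertex $v$ and a factor $J^{\mu_e\nu_e}$ at each edge $e$, differentiate $C_v$ by $\partial_{z^{\mu_e}}$ for each edge $e$ leaving $v$ and by $\partial_{z^{\nu_e}}$ for each edge entering $v$, multiply and sum over all indices. *)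

theory Defs
  imports "HOL-Analysis.Analysis"
begin

text \<open>Phase space T*R^N = R^N x R^N, points z = (x,p). Coordinate indices
  are Inl i (the x-coordinates z^1..z^N) and Inr i (the p-coordinates z^{N+1}..z^{2N}).\<close>

type_synonym 'n phase = "(real ^ 'n) \<times> (real ^ 'n)"
type_synonym 'n idx = "'n + 'n"

definition coord_vec :: "'n::finite idx \<Rightarrow> 'n phase" where
  "coord_vec \<mu> = (case \<mu> of Inl i \<Rightarrow> (axis i 1, 0) | Inr i \<Rightarrow> (0, axis i 1))"

definition Jmat :: "'n::finite idx \<Rightarrow> 'n idx \<Rightarrow> real" where
  "Jmat \<mu> \<nu> = (case (\<mu>, \<nu>) of
      (Inl i, Inr j) \<Rightarrow> (if i = j then 1 else 0)
    | (Inr i, Inl j) \<Rightarrow> (if i = j then -1 else 0)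
    | _ \<Rightarrow> 0)"

definition pd :: "'n::finite idx \<Rightarrow> ('n phase \<Rightarrow> complex) \<Rightarrow> ('n phase \<Rightarrow> complex)" where
  "pd \<mu> f = (\<lambda>z. frechet_derivative f (at z) (coord_vec \<mu>))"

fun pds :: "'n::finite idx list \<Rightarrow> ('n phase \<Rightarrow> complex) \<Rightarrow> ('n phase \<Rightarrow> complex)" where
  "pds [] f = f"
| "pds (\<mu> # \<mu>s) f = pds \<mu>s (pd \<mu> f)"

definition smooth_symbol :: "('n::finite phase \<Rightarrow> complex) \<Rightarrow> bool" where
  "smooth_symbol f \<longleftrightarrow> (\<forall>\<mu>s. pds \<mu>s f differentiable_on UNIV)"

definition labeled_graph :: "nat \<Rightarrow> nat \<Rightarrow> (nat \<Rightarrow> nat set) \<Rightarrow> bool" where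
  "labeled_graph V E s \<longleftrightarrow>
     (\<forall>e\<in>{1..E}. card (s e) = 2 \<and> s e \<subseteq> {1..V}) \<and> (\<forall>e. e \<notin> {1..E} \<longrightarrow> s e = {})"

text \<open>Derivative indices acting on vertex v, given index assignment m (m e = (mu_e, nu_e)):
  edge e with s e = {i,j}, i<j, is oriented i -> j; it contributes mu_e at i and nu_e at j.\<close>
definition vertex_indices :: "nat \<Rightarrow> (nat \<Rightarrow> nat set) \<Rightarrow> (nat \<Rightarrow> 'i \<times> 'i) \<Rightarrow> nat \<Rightarrow> 'i list" where
  "vertex_indices E s m v =
     concat (map (\<lambda>e. if v \<in> s e then (if v = Min (s e) then [fst (m e)] else [snd (m e)]) else [])
                 [1..<E+1])"

definition lambda_graph :: "nat \<Rightarrow> nat \<Rightarrow> (nat \<Rightarrow> nat set) \<Rightarrow> (nat \<Rightarrow> ('n::finite phase \<Rightarrow> complex))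
    \<Rightarrow> ('n phase \<Rightarrow> complex)" where
  "lambda_graph V E s C = (\<lambda>z.
     \<Sum>m \<in> Pi\<^sub>E {1..E} (\<lambda>_. (UNIV :: ('n idx \<times> 'n idx) set)).
       (\<Prod>e\<in>{1..E}. complex_of_real (Jmat (fst (m e)) (snd (m e)))) *
       (\<Prod>v\<in>{1..V}. pds (vertex_indices E s m v) (C v) z))"

end

theory Submission
  imports Defs
begin

(* Expand lambda as a sum over index assignments m of the edge weight times the product of the
   vertex factors. By the Leibniz rule, k derivatives of a product over {1..V} give a sum over the
   maps w : {1..k} -> {1..V}, where w j is the factor hit by the j-th derivative. For fixed w the
   resulting term is lambda of the graph in which the new edge E + j joins w j to V + 1: as
   w j < V + 1 the edge is oriented towards the new vertex, so mu_j lands on w j and nu_j on D.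
   Finally, w determines this graph and vice versa. *)

lemma pds_append: "pds (xs @ ys) f = pds ys (pds xs f)"
  by (induction xs arbitrary: f) auto

lemma smooth_symbol_pds: "smooth_symbol f \<Longrightarrow> smooth_symbol (pds xs f)"
  unfolding smooth_symbol_def by (metis pds_append)

lemma smooth_symbol_differentiable: "smooth_symbol f \<Longrightarrow> pds xs f differentiable (at z)"
  unfolding smooth_symbol_def differentiable_on_def by (metis UNIV_I)

lemma pd_eq_derivative: "(f has_derivative f') (at z) \<Longrightarrow> pd \<mu> f z = f' (coord_vec \<mu>)"
  unfolding pd_def by (metis frechet_derivative_at)

lemma differentiable_prod:
  fixes g :: "'v \<Rightarrow> 'a::real_normed_vector \<Rightarrow> 'b::real_normed_field"
  assumes "\<And>v. v \<in> I \<Longrightarrow> g v differentiable (at z)"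
  shows "(\<lambda>z. \<Prod>v\<in>I. g v z) differentiable (at z)"
proof -
  have "((\<lambda>z. \<Prod>v\<in>I. g v z) has_derivative
      (\<lambda>h. \<Sum>u\<in>I. frechet_derivative (g u) (at z) h * (\<Prod>v\<in>I - {u}. g v z))) (at z)"
    using assms by (intro has_derivative_prod) (simp add: frechet_derivative_works)
  then show ?thesis by (rule differentiableI)
qed

lemma pd_lincomb:
  assumes "finite M" "\<And>m. m \<in> M \<Longrightarrow> g m differentiable (at z)"
  shows "pd \<mu> (\<lambda>z. \<Sum>m\<in>M. c m * g m z) z = (\<Sum>m\<in>M. c m * pd \<mu> (g m) z)"
proof -
  have "((\<lambda>z. \<Sum>m\<in>M. c m * g m z) has_derivative
      (\<lambda>h. \<Sum>m\<in>M. c m * frechet_derivative (g m) (at z) h)) (at z)"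
    using assms by (intro has_derivative_sum has_derivative_mult_right)
      (simp add: frechet_derivative_works)
  from pd_eq_derivative[OF this] show ?thesis by (simp add: pd_def)
qed

lemma pd_sum:
  assumes "finite M" "\<And>m. m \<in> M \<Longrightarrow> g m differentiable (at z)"
  shows "pd \<mu> (\<lambda>z. \<Sum>m\<in>M. g m z) z = (\<Sum>m\<in>M. pd \<mu> (g m) z)"
  using pd_lincomb[OF assms, where c = "\<lambda>_. 1"] by simp

lemma pd_prod:
  assumes "finite I" "\<And>v. v \<in> I \<Longrightarrow> g v differentiable (at z)"
  shows "pd \<mu> (\<lambda>z. \<Prod>v\<in>I. g v z) z =
    (\<Sum>u\<in>I. \<Prod>v\<in>I. if v = u then pd \<mu> (g v) z else g v z)"
proof -
  have "((\<lambda>z. \<Prod>v\<in>I. g v z) has_derivative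
      (\<lambda>h. \<Sum>u\<in>I. frechet_derivative (g u) (at z) h * (\<Prod>v\<in>I - {u}. g v z))) (at z)"
    using assms by (intro has_derivative_prod) (simp add: frechet_derivative_works)
  from pd_eq_derivative[OF this]
  have "pd \<mu> (\<lambda>z. \<Prod>v\<in>I. g v z) z = (\<Sum>u\<in>I. pd \<mu> (g u) z * (\<Prod>v\<in>I - {u}. g v z))"
    by (simp add: pd_def)
  also have "\<dots> = (\<Sum>u\<in>I. \<Prod>v\<in>I. if v = u then pd \<mu> (g v) z else g v z)"
  proof (intro sum.cong refl)
    fix u assume "u \<in> I"
    with assms(1) show "pd \<mu> (g u) z * (\<Prod>v\<in>I - {u}. g v z) =
        (\<Prod>v\<in>I. if v = u then pd \<mu> (g v) z else g v z)"
      by (simp add: prod.remove[of I u] cong: prod.cong_simp)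
  qed
  finally show ?thesis .
qed

lemma pds_lincomb:
  assumes "finite M" "\<And>m. m \<in> M \<Longrightarrow> smooth_symbol (g m)"
  shows "pds xs (\<lambda>z. \<Sum>m\<in>M. c m * g m z) = (\<lambda>z. \<Sum>m\<in>M. c m * pds xs (g m) z)"
proof (induction xs rule: rev_induct)
  case (snoc \<mu> xs)
  have "pd \<mu> (\<lambda>z. \<Sum>m\<in>M. c m * pds xs (g m) z) z = (\<Sum>m\<in>M. c m * pd \<mu> (pds xs (g m)) z)" for z
    using assms by (intro pd_lincomb) (auto intro: smooth_symbol_differentiable)
  with snoc.IH show ?case
    by (simp add: pds_append)
qed simp

lemma filter_upt_fun_upd_last:
  "filter (\<lambda>j. (w(Suc k := u)) j = v) [1..<Suc k + 1] =
   filter (\<lambda>j. w j = v) [1..<k + 1] @ (if u = v then [Suc k] else [])"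
proof -
  have "filter (\<lambda>j. (w(Suc k := u)) j = v) [1..<k + 1] = filter (\<lambda>j. w j = v) [1..<k + 1]"
    by (rule filter_cong) auto
  then show ?thesis by simp
qed

lemma pds_prod_leibniz:
  assumes I: "finite I" and smooth: "\<And>v. v \<in> I \<Longrightarrow> smooth_symbol (g v)"
  shows "pds (map \<mu> [1..<k + 1]) (\<lambda>z. \<Prod>v\<in>I. g v z) z =
    (\<Sum>w\<in>Pi\<^sub>E {1..k} (\<lambda>_. I). \<Prod>v\<in>I. pds (map \<mu> (filter (\<lambda>j. w j = v) [1..<k + 1])) (g v) z)"
proof (induction k arbitrary: z)
  case (Suc k)
  define G where "G w v = pds (map \<mu> (filter (\<lambda>j. w j = v) [1..<k + 1])) (g v)" for w v
  have G_differentiable: "G w v differentiable (at z)" if "v \<in> I" for w v z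
    unfolding G_def using smooth_symbol_differentiable smooth that by blast
  have fin: "finite (Pi\<^sub>E {1..k} (\<lambda>_. I))"
    using I by (simp add: finite_PiE)
  have IH: "pds (map \<mu> [1..<k + 1]) (\<lambda>z. \<Prod>v\<in>I. g v z) =
      (\<lambda>z. \<Sum>w\<in>Pi\<^sub>E {1..k} (\<lambda>_. I). \<Prod>v\<in>I. G w v z)"
    using Suc.IH unfolding G_def by auto
  have "pds (map \<mu> [1..<Suc k + 1]) (\<lambda>z. \<Prod>v\<in>I. g v z) z =
      pd (\<mu> (Suc k)) (pds (map \<mu> [1..<k + 1]) (\<lambda>z. \<Prod>v\<in>I. g v z)) z"
    by (simp add: pds_append)
  also have "\<dots> = (\<Sum>w\<in>Pi\<^sub>E {1..k} (\<lambda>_. I). pd (\<mu> (Suc k)) (\<lambda>z. \<Prod>v\<in>I. G w v z) z)"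
    unfolding IH by (rule pd_sum[OF fin]) (auto intro!: differentiable_prod G_differentiable)
  also have "\<dots> = (\<Sum>w\<in>Pi\<^sub>E {1..k} (\<lambda>_. I). \<Sum>u\<in>I.
      \<Prod>v\<in>I. if v = u then pd (\<mu> (Suc k)) (G w v) z else G w v z)"
    by (intro sum.cong refl pd_prod[OF I] G_differentiable)
  also have "\<dots> = (\<Sum>w\<in>Pi\<^sub>E {1..k} (\<lambda>_. I). \<Sum>u\<in>I.
      \<Prod>v\<in>I. pds (map \<mu> (filter (\<lambda>j. (w(Suc k := u)) j = v) [1..<Suc k + 1])) (g v) z)"
    unfolding filter_upt_fun_upd_last
    by (intro sum.cong prod.cong refl) (simp add: G_def pds_append del: upt_Suc)
  also have "\<dots> = (\<Sum>(u, w)\<in>I \<times> Pi\<^sub>E {1..k} (\<lambda>_. I).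
      \<Prod>v\<in>I. pds (map \<mu> (filter (\<lambda>j. (w(Suc k := u)) j = v) [1..<Suc k + 1])) (g v) z)"
    by (subst sum.swap) (simp add: sum.cartesian_product del: upt_Suc)
  also have "\<dots> = (\<Sum>w\<in>Pi\<^sub>E {1..Suc k} (\<lambda>_. I).
      \<Prod>v\<in>I. pds (map \<mu> (filter (\<lambda>j. w j = v) [1..<Suc k + 1])) (g v) z)"
  proof -
    have "inj_on (\<lambda>(u, w). w(Suc k := u)) (I \<times> Pi\<^sub>E {1..k} (\<lambda>_. I))"
      using inj_combinator[of "Suc k" "{1..k}" "\<lambda>_. I"] by simp
    moreover have "{1..Suc k} = insert (Suc k) {1..k}"
      by auto
    ultimately show ?thesis
      by (simp only: PiE_insert_eq sum.reindex comp_def split_def)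
  qed
  finally show ?case .
qed simp

lemma list_eq_map_nth_upt: "xs = map (\<lambda>j. xs ! (j - 1)) [1..<length xs + 1]"
  by (rule nth_equalityI) (simp_all del: upt_Suc)

lemma smooth_symbol_prod:
  fixes g :: "'v \<Rightarrow> 'n::finite phase \<Rightarrow> complex"
  assumes "finite I" "\<And>v. v \<in> I \<Longrightarrow> smooth_symbol (g v)"
  shows "smooth_symbol (\<lambda>z. \<Prod>v\<in>I. g v z)"
  unfolding smooth_symbol_def differentiable_on_def
proof (intro allI ballI)
  fix xs :: "'n idx list" and z :: "'n phase"
  let ?\<mu> = "\<lambda>j. xs ! (j - 1)"
  have "pds xs (\<lambda>z. \<Prod>v\<in>I. g v z) = (\<lambda>z. \<Sum>w\<in>Pi\<^sub>E {1..length xs} (\<lambda>_. I).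
      \<Prod>v\<in>I. pds (map ?\<mu> (filter (\<lambda>j. w j = v) [1..<length xs + 1])) (g v) z)"
    using pds_prod_leibniz[OF assms, where \<mu> = ?\<mu> and k = "length xs"] list_eq_map_nth_upt[of xs] by auto
  moreover have "\<dots> differentiable (at z)"
    using assms by (intro differentiable_sum ballI differentiable_prod)
      (auto simp: finite_PiE smooth_symbol_differentiable)
  ultimately show "pds xs (\<lambda>z. \<Prod>v\<in>I. g v z) differentiable (at z within UNIV)"
    by simp
qed

definition append_assign :: "nat \<Rightarrow> nat \<Rightarrow> (nat \<Rightarrow> 'a) \<Rightarrow> (nat \<Rightarrow> 'a) \<Rightarrow> nat \<Rightarrow> 'a" where
  "append_assign E k m m' = (\<lambda>e\<in>{1..E + k}. if e \<le> E then m e else m' (e - E))"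

lemma bij_betw_append_assign:
  "bij_betw (\<lambda>(m, m'). append_assign E k m m')
     (Pi\<^sub>E {1..E} (\<lambda>_. A) \<times> Pi\<^sub>E {1..k} (\<lambda>_. A)) (Pi\<^sub>E {1..E + k} (\<lambda>_. A))"
proof (rule bij_betwI[where g = "\<lambda>m''. (restrict m'' {1..E}, \<lambda>j\<in>{1..k}. m'' (E + j))"])
  have "m' (e - E) \<in> A" if "m' \<in> Pi\<^sub>E {1..k} (\<lambda>_. A)" "E < e" "e \<le> E + k" for m' e
    using that(1) by (rule PiE_mem) (use that in auto)
  then show "(\<lambda>(m, m'). append_assign E k m m')
      \<in> Pi\<^sub>E {1..E} (\<lambda>_. A) \<times> Pi\<^sub>E {1..k} (\<lambda>_. A) \<rightarrow> Pi\<^sub>E {1..E + k} (\<lambda>_. A)"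
    by (auto simp: append_assign_def)
  show "(\<lambda>m''. (restrict m'' {1..E}, \<lambda>j\<in>{1..k}. m'' (E + j)))
      \<in> Pi\<^sub>E {1..E + k} (\<lambda>_. A) \<rightarrow> Pi\<^sub>E {1..E} (\<lambda>_. A) \<times> Pi\<^sub>E {1..k} (\<lambda>_. A)"
    by auto
  have "restrict (append_assign E k m m') {1..E} = m \<and>
      (\<lambda>j\<in>{1..k}. append_assign E k m m' (E + j)) = m'"
    if "m \<in> Pi\<^sub>E {1..E} (\<lambda>_. A)" "m' \<in> Pi\<^sub>E {1..k} (\<lambda>_. A)" for m m'
    using that
    by (intro conjI extensionalityI[where A = "{1..E}"] extensionalityI[where A = "{1..k}"])
      (auto simp: append_assign_def PiE_iff)
  then show "(\<lambda>m''. (restrict m'' {1..E}, \<lambda>j\<in>{1..k}. m'' (E + j)))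
      ((\<lambda>(m, m'). append_assign E k m m') x) = x"
    if "x \<in> Pi\<^sub>E {1..E} (\<lambda>_. A) \<times> Pi\<^sub>E {1..k} (\<lambda>_. A)" for x
    using that by auto
  show "(\<lambda>(m, m'). append_assign E k m m') (restrict m'' {1..E}, \<lambda>j\<in>{1..k}. m'' (E + j)) = m''"
    if "m'' \<in> Pi\<^sub>E {1..E + k} (\<lambda>_. A)" for m''
    using that
    by (intro extensionalityI[where A = "{1..E + k}"]) (auto simp: append_assign_def PiE_iff)
qed

lemma prod_append_assign:
  "(\<Prod>e\<in>{1..E + k}. g (append_assign E k m m' e)) = (\<Prod>e\<in>{1..E}. g (m e)) * (\<Prod>j\<in>{1..k}. g (m' j))"
proof -
  have "{1..E + k} = {1..E} \<union> {E + 1..E + k}"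
    by auto
  then have "(\<Prod>e\<in>{1..E + k}. g (append_assign E k m m' e)) =
      (\<Prod>e\<in>{1..E}. g (append_assign E k m m' e)) * (\<Prod>e\<in>{E + 1..E + k}. g (append_assign E k m m' e))"
    by (simp add: prod.union_disjoint)
  also have "\<dots> = (\<Prod>e\<in>{1..E}. g (m e)) * (\<Prod>j\<in>{1..k}. g (m' j))"
    using prod.shift_bounds_cl_nat_ivl[of "\<lambda>e. g (append_assign E k m m' e)" 1 E k]
    by (simp add: append_assign_def add.commute)
  finally show ?thesis .
qed

definition extend_graph :: "nat \<Rightarrow> nat \<Rightarrow> nat \<Rightarrow> (nat \<Rightarrow> nat set) \<Rightarrow> (nat \<Rightarrow> nat) \<Rightarrow> nat \<Rightarrow> nat set" where
  "extend_graph V E k s w = (\<lambda>e. if e \<in> {E + 1..E + k} then {w (e - E), V + 1} else s e)"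

definition vertex_extensions :: "nat \<Rightarrow> nat \<Rightarrow> nat \<Rightarrow> (nat \<Rightarrow> nat set) \<Rightarrow> (nat \<Rightarrow> nat set) set" where
  "vertex_extensions V E k s = {s'. labeled_graph (V + 1) (E + k) s' \<and> (\<forall>e\<in>{1..E}. s' e = s e) \<and>
     (\<forall>e\<in>{E + 1..E + k}. \<exists>w\<in>{1..V}. s' e = {w, V + 1})}"

lemma Min_edge_new_vertex: "a \<le> V \<Longrightarrow> Min {a, V + 1} = (a::nat)"
  by simp

lemma extend_graph_new_edge:
  assumes "w \<in> Pi\<^sub>E {1..k} (\<lambda>_. {1..V})" "e \<in> {E + 1..E + k}"
  shows "extend_graph V E k s w e = {w (e - E), V + 1}" "w (e - E) \<in> {1..V}"
  using assms(2) by (simp add: extend_graph_def) (rule PiE_mem[OF assms(1)], use assms(2) in auto)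

lemma labeled_graph_extend_graph:
  assumes s: "labeled_graph V E s" and w: "w \<in> Pi\<^sub>E {1..k} (\<lambda>_. {1..V})"
  shows "labeled_graph (V + 1) (E + k) (extend_graph V E k s w)"
proof -
  have "card (extend_graph V E k s w e) = 2 \<and> extend_graph V E k s w e \<subseteq> {1..V + 1}"
    if e: "e \<in> {1..E + k}" for e
  proof (cases "e \<in> {E + 1..E + k}")
    case True
    then show ?thesis
      using extend_graph_new_edge[OF w True] by auto
  next
    case False
    with e s have "card (s e) = 2" "s e \<subseteq> {1..V}"
      by (auto simp: labeled_graph_def)
    with False show ?thesis
      by (auto simp: extend_graph_def)
  qed
  moreover have "extend_graph V E k s w e = {}" if "e \<notin> {1..E + k}" for e
    using that s by (auto simp: extend_graph_def labeled_graph_def)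
  ultimately show ?thesis
    unfolding labeled_graph_def by blast
qed

lemma bij_betw_extend_graph:
  assumes "labeled_graph V E s"
  shows "bij_betw (extend_graph V E k s) (Pi\<^sub>E {1..k} (\<lambda>_. {1..V})) (vertex_extensions V E k s)"
proof (rule bij_betwI[where g = "\<lambda>s'. \<lambda>j\<in>{1..k}. Min (s' (E + j))"])
  show "extend_graph V E k s \<in> Pi\<^sub>E {1..k} (\<lambda>_. {1..V}) \<rightarrow> vertex_extensions V E k s"
  proof
    fix w assume w: "w \<in> Pi\<^sub>E {1..k} (\<lambda>_. {1..V})"
    have "\<exists>a\<in>{1..V}. extend_graph V E k s w e = {a, V + 1}" if "e \<in> {E + 1..E + k}" for e
      using extend_graph_new_edge[OF w that] by blast
    then show "extend_graph V E k s w \<in> vertex_extensions V E k s"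
      using labeled_graph_extend_graph[OF assms w]
      by (simp add: vertex_extensions_def extend_graph_def)
  qed
  show "(\<lambda>s'. \<lambda>j\<in>{1..k}. Min (s' (E + j))) \<in> vertex_extensions V E k s \<rightarrow> Pi\<^sub>E {1..k} (\<lambda>_. {1..V})"
  proof
    fix s' assume s': "s' \<in> vertex_extensions V E k s"
    have "Min (s' (E + j)) \<in> {1..V}" if "j \<in> {1..k}" for j
    proof -
      have "E + j \<in> {E + 1..E + k}"
        using that by auto
      with s' obtain a where "a \<in> {1..V}" "s' (E + j) = {a, V + 1}"
        unfolding vertex_extensions_def by blast
      then show ?thesis
        by (simp add: Min_edge_new_vertex)
    qed
    then show "(\<lambda>j\<in>{1..k}. Min (s' (E + j))) \<in> Pi\<^sub>E {1..k} (\<lambda>_. {1..V})"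
      by (simp add: restrict_PiE_iff)
  qed
  show "(\<lambda>j\<in>{1..k}. Min (extend_graph V E k s w (E + j))) = w"
    if "w \<in> Pi\<^sub>E {1..k} (\<lambda>_. {1..V})" for w
  proof (rule extensionalityI[where A = "{1..k}"])
    fix j assume j: "j \<in> {1..k}"
    then have "E + j \<in> {E + 1..E + k}"
      by auto
    from j extend_graph_new_edge[OF that this]
    show "(\<lambda>j\<in>{1..k}. Min (extend_graph V E k s w (E + j))) j = w j"
      by (simp add: Min_edge_new_vertex)
  qed (use that in \<open>auto simp: PiE_iff\<close>)
  show "extend_graph V E k s (\<lambda>j\<in>{1..k}. Min (s' (E + j))) = s'"
    if "s' \<in> vertex_extensions V E k s" for s'
  proof
    fix e
    show "extend_graph V E k s (\<lambda>j\<in>{1..k}. Min (s' (E + j))) e = s' e"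
    proof (cases "e \<in> {E + 1..E + k}")
      case True
      with that obtain a where "a \<in> {1..V}" "s' e = {a, V + 1}"
        unfolding vertex_extensions_def by blast
      moreover have "e - E \<in> {1..k}" "E + (e - E) = e"
        using True by auto
      ultimately show ?thesis
        using True by (simp add: extend_graph_def Min_edge_new_vertex)
    next
      case False
      have "s' e = s e"
      proof (cases "e \<in> {1..E}")
        case True
        with that show ?thesis
          unfolding vertex_extensions_def by blast
      next
        case outside: False
        with False have "e \<notin> {1..E + k}"
          by auto
        with outside that assms show ?thesis
          unfolding vertex_extensions_def labeled_graph_def by blast
      qed
      with False show ?thesis
        by (auto simp: extend_graph_def)
    qed
  qed
qed

lemma concat_map_if_singleton:
  "concat (map (\<lambda>x. if P x then [f x] else []) xs) = map f (filter P xs)"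
  by (induction xs) auto

lemma vertex_indices_cong:
  assumes "\<And>e. e \<in> {1..E} \<Longrightarrow> s e = s' e" "\<And>e. e \<in> {1..E} \<Longrightarrow> m e = m' e"
  shows "vertex_indices E s m v = vertex_indices E s' m' v"
  unfolding vertex_indices_def using assms by (intro arg_cong[where f = concat] map_cong) auto

lemma vertex_indices_add:
  "vertex_indices (E + k) s m v = vertex_indices E s m v @
     concat (map (\<lambda>j. if v \<in> s (E + j) then (if v = Min (s (E + j)) then [fst (m (E + j))]
       else [snd (m (E + j))]) else []) [1..<k + 1])"
  unfolding vertex_indices_def by (induction k) (simp_all del: upt_Suc add: upt_Suc_append)

lemma vertex_indices_extend_graph_old:
  assumes w: "w \<in> Pi\<^sub>E {1..k} (\<lambda>_. {1..V})" and v: "v \<in> {1..V}"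
  shows "vertex_indices (E + k) (extend_graph V E k s w) (append_assign E k m m') v =
    vertex_indices E s m v @ map (\<lambda>j. fst (m' j)) (filter (\<lambda>j. w j = v) [1..<k + 1])"
proof -
  have "vertex_indices E (extend_graph V E k s w) (append_assign E k m m') v = vertex_indices E s m v"
    by (rule vertex_indices_cong) (auto simp: extend_graph_def append_assign_def)
  moreover have "concat (map (\<lambda>j. if v \<in> extend_graph V E k s w (E + j)
        then (if v = Min (extend_graph V E k s w (E + j)) then [fst (append_assign E k m m' (E + j))]
          else [snd (append_assign E k m m' (E + j))]) else []) [1..<k + 1])
      = concat (map (\<lambda>j. if w j = v then [fst (m' j)] else []) [1..<k + 1])"
  proof (intro arg_cong[where f = concat] map_cong refl)
    fix j assume "j \<in> set [1..<k + 1]"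
    then have "E + j \<in> {E + 1..E + k}"
      by auto
    with v extend_graph_new_edge[OF w this]
    show "(if v \<in> extend_graph V E k s w (E + j)
        then (if v = Min (extend_graph V E k s w (E + j)) then [fst (append_assign E k m m' (E + j))]
          else [snd (append_assign E k m m' (E + j))]) else [])
      = (if w j = v then [fst (m' j)] else [])"
      by (auto simp: append_assign_def Min_edge_new_vertex)
  qed
  ultimately show ?thesis
    by (simp only: vertex_indices_add concat_map_if_singleton)
qed

lemma vertex_indices_extend_graph_new:
  assumes s: "labeled_graph V E s" and w: "w \<in> Pi\<^sub>E {1..k} (\<lambda>_. {1..V})"
  shows "vertex_indices (E + k) (extend_graph V E k s w) (append_assign E k m m') (V + 1) =
    map (\<lambda>j. snd (m' j)) [1..<k + 1]"
proof -
  have "V + 1 \<notin> extend_graph V E k s w e" if "e \<in> set [1..<E + 1]" for e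
  proof -
    from that have e: "e \<in> {1..E}"
      by auto
    with s have "s e \<subseteq> {1..V}"
      by (simp add: labeled_graph_def)
    with e show ?thesis
      by (auto simp: extend_graph_def)
  qed
  then have "vertex_indices E (extend_graph V E k s w) (append_assign E k m m') (V + 1) = []"
    by (simp add: vertex_indices_def)
  moreover have "concat (map (\<lambda>j. if V + 1 \<in> extend_graph V E k s w (E + j)
        then (if V + 1 = Min (extend_graph V E k s w (E + j)) then [fst (append_assign E k m m' (E + j))]
          else [snd (append_assign E k m m' (E + j))]) else []) [1..<k + 1])
      = concat (map (\<lambda>j. [snd (m' j)]) [1..<k + 1])"
  proof (intro arg_cong[where f = concat] map_cong refl)
    fix j assume "j \<in> set [1..<k + 1]"
    then have "E + j \<in> {E + 1..E + k}"
      by auto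
    with extend_graph_new_edge[OF w this]
    show "(if V + 1 \<in> extend_graph V E k s w (E + j)
        then (if V + 1 = Min (extend_graph V E k s w (E + j)) then [fst (append_assign E k m m' (E + j))]
          else [snd (append_assign E k m m' (E + j))]) else [])
      = [snd (m' j)]"
      by (auto simp: append_assign_def Min_edge_new_vertex)
  qed
  ultimately show ?thesis
    by (simp only: vertex_indices_add concat_map_singleton append_Nil)
qed

definition edge_weight :: "nat \<Rightarrow> (nat \<Rightarrow> 'n::finite idx \<times> 'n idx) \<Rightarrow> complex" where
  "edge_weight E m = (\<Prod>e\<in>{1..E}. complex_of_real (Jmat (fst (m e)) (snd (m e))))"

lemma lambda_graph_eq:
  "lambda_graph V E s C z = (\<Sum>m\<in>Pi\<^sub>E {1..E} (\<lambda>_. UNIV).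
     edge_weight E m * (\<Prod>v\<in>{1..V}. pds (vertex_indices E s m v) (C v) z))"
  by (simp add: lambda_graph_def edge_weight_def)

lemma pds_lambda_graph:
  assumes "\<forall>v\<in>{1..V}. smooth_symbol (C v)"
  shows "pds (map \<mu> [1..<k + 1]) (lambda_graph V E s C) z =
    (\<Sum>m\<in>Pi\<^sub>E {1..E} (\<lambda>_. UNIV). \<Sum>w\<in>Pi\<^sub>E {1..k} (\<lambda>_. {1..V}). edge_weight E m *
       (\<Prod>v\<in>{1..V}. pds (vertex_indices E s m v @ map \<mu> (filter (\<lambda>j. w j = v) [1..<k + 1])) (C v) z))"
proof -
  have smooth: "smooth_symbol (pds (vertex_indices E s m v) (C v))" if "v \<in> {1..V}" for m v
    using assms that by (simp add: smooth_symbol_pds)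
  have expand: "lambda_graph V E s C = (\<lambda>z. \<Sum>m\<in>Pi\<^sub>E {1..E} (\<lambda>_. UNIV).
      edge_weight E m * (\<Prod>v\<in>{1..V}. pds (vertex_indices E s m v) (C v) z))"
    by (simp add: fun_eq_iff lambda_graph_eq)
  have lincomb: "pds (map \<mu> [1..<k + 1]) (lambda_graph V E s C) = (\<lambda>z. \<Sum>m\<in>Pi\<^sub>E {1..E} (\<lambda>_. UNIV).
      edge_weight E m * pds (map \<mu> [1..<k + 1]) (\<lambda>z. \<Prod>v\<in>{1..V}. pds (vertex_indices E s m v) (C v) z) z)"
    unfolding expand
    by (rule pds_lincomb) (auto simp: finite_PiE intro!: smooth_symbol_prod smooth)
  have leibniz: "pds (map \<mu> [1..<k + 1]) (\<lambda>z. \<Prod>v\<in>{1..V}. pds (vertex_indices E s m v) (C v) z) z =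
      (\<Sum>w\<in>Pi\<^sub>E {1..k} (\<lambda>_. {1..V}).
        \<Prod>v\<in>{1..V}. pds (vertex_indices E s m v @ map \<mu> (filter (\<lambda>j. w j = v) [1..<k + 1])) (C v) z)" for m
    unfolding pds_append by (rule pds_prod_leibniz[OF finite_atLeastAtMost smooth])
  show ?thesis
    unfolding lincomb leibniz sum_distrib_left ..
qed

lemma sum_PiE_append_assign:
  "(\<Sum>m''\<in>Pi\<^sub>E {1..E + k} (\<lambda>_. A). g m'') =
    (\<Sum>m\<in>Pi\<^sub>E {1..E} (\<lambda>_. A). \<Sum>m'\<in>Pi\<^sub>E {1..k} (\<lambda>_. A). g (append_assign E k m m'))"
  using sum.reindex_bij_betw[OF bij_betw_append_assign, of g]
  by (simp add: sum.cartesian_product split_def)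

lemma edge_weight_append_assign:
  "edge_weight (E + k) (append_assign E k m m') = edge_weight E m * edge_weight k m'"
  unfolding edge_weight_def by (rule prod_append_assign)

lemma prod_vertices_extend_graph:
  assumes s: "labeled_graph V E s" and w: "w \<in> Pi\<^sub>E {1..k} (\<lambda>_. {1..V})"
  shows "(\<Prod>v\<in>{1..V + 1}. pds (vertex_indices (E + k) (extend_graph V E k s w) (append_assign E k m m') v)
      ((C(V + 1 := D)) v) z) =
    (\<Prod>v\<in>{1..V}. pds (vertex_indices E s m v @ map (\<lambda>j. fst (m' j)) (filter (\<lambda>j. w j = v) [1..<k + 1])) (C v) z) *
    pds (map (\<lambda>j. snd (m' j)) [1..<k + 1]) D z" (is "?lhs = ?rhs")
proof -
  have "{1..V + 1} = insert (V + 1) {1..V}"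
    by auto
  then have "?lhs =
      (\<Prod>v\<in>{1..V}. pds (vertex_indices (E + k) (extend_graph V E k s w) (append_assign E k m m') v) (C v) z) *
      pds (vertex_indices (E + k) (extend_graph V E k s w) (append_assign E k m m') (V + 1)) D z"
    by (simp add: mult.commute)
  also have "\<dots> = ?rhs"
    by (intro arg_cong2[where f = "(*)"] prod.cong refl)
      (simp_all only: vertex_indices_extend_graph_old[OF w] vertex_indices_extend_graph_new[OF s w])
  finally show ?thesis .
qed

lemma lambda_graph_extend_graph:
  assumes "labeled_graph V E s" and "w \<in> Pi\<^sub>E {1..k} (\<lambda>_. {1..V})"
  shows "lambda_graph (V + 1) (E + k) (extend_graph V E k s w) (C(V + 1 := D)) z =
    (\<Sum>m\<in>Pi\<^sub>E {1..E} (\<lambda>_. UNIV). \<Sum>m'\<in>Pi\<^sub>E {1..k} (\<lambda>_. UNIV).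
       edge_weight E m * edge_weight k m' *
       (\<Prod>v\<in>{1..V}. pds (vertex_indices E s m v @ map (\<lambda>j. fst (m' j)) (filter (\<lambda>j. w j = v) [1..<k + 1])) (C v) z) *
       pds (map (\<lambda>j. snd (m' j)) [1..<k + 1]) D z)"
  unfolding lambda_graph_eq sum_PiE_append_assign
  by (simp only: prod_vertices_extend_graph[OF assms] edge_weight_append_assign mult.assoc)

theorem lemma4:
  fixes V E k :: nat
    and s :: "nat \<Rightarrow> nat set"
    and C :: "nat \<Rightarrow> ('n::finite phase \<Rightarrow> complex)"
    and D :: "'n phase \<Rightarrow> complex"
  assumes "labeled_graph V E s"
    and "\<forall>v\<in>{1..V}. smooth_symbol (C v)"
    and "smooth_symbol D"
  shows "\<forall>z. (\<Sum>mn \<in> Pi\<^sub>E {1..k} (\<lambda>_. (UNIV :: ('n idx \<times> 'n idx) set)).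
              pds (map (\<lambda>j. fst (mn j)) [1..<k+1]) (lambda_graph V E s C) z *
              (\<Prod>j\<in>{1..k}. complex_of_real (Jmat (fst (mn j)) (snd (mn j)))) *
              pds (map (\<lambda>j. snd (mn j)) [1..<k+1]) D z)
           = (\<Sum>s' \<in> {s'. labeled_graph (V+1) (E+k) s' \<and> (\<forall>e\<in>{1..E}. s' e = s e) \<and>
                           (\<forall>e\<in>{E+1..E+k}. \<exists>w\<in>{1..V}. s' e = {w, V+1})}.
                lambda_graph (V+1) (E+k) s' (C(V+1 := D)) z)"
proof -
  let ?P = "Pi\<^sub>E {1..E} (\<lambda>_. UNIV :: ('n idx \<times> 'n idx) set)"
  let ?Q = "Pi\<^sub>E {1..k} (\<lambda>_. UNIV :: ('n idx \<times> 'n idx) set)"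
  let ?W = "Pi\<^sub>E {1..k} (\<lambda>_. {1..V})"
  have "(\<Sum>mn\<in>?Q. pds (map (\<lambda>j. fst (mn j)) [1..<k + 1]) (lambda_graph V E s C) z *
      edge_weight k mn * pds (map (\<lambda>j. snd (mn j)) [1..<k + 1]) D z) =
      (\<Sum>s'\<in>vertex_extensions V E k s. lambda_graph (V + 1) (E + k) s' (C(V + 1 := D)) z)" for z
  proof -
    let ?term = "\<lambda>w m mn. edge_weight E m * edge_weight k mn *
      (\<Prod>v\<in>{1..V}. pds (vertex_indices E s m v @ map (\<lambda>j. fst (mn j)) (filter (\<lambda>j. w j = v) [1..<k + 1])) (C v) z) *
      pds (map (\<lambda>j. snd (mn j)) [1..<k + 1]) D z"
    have "(\<Sum>mn\<in>?Q. pds (map (\<lambda>j. fst (mn j)) [1..<k + 1]) (lambda_graph V E s C) z *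
        edge_weight k mn * pds (map (\<lambda>j. snd (mn j)) [1..<k + 1]) D z) =
        (\<Sum>mn\<in>?Q. \<Sum>m\<in>?P. \<Sum>w\<in>?W. ?term w m mn)"
      unfolding pds_lambda_graph[OF assms(2)]
      by (simp add: sum_distrib_left sum_distrib_right ac_simps del: upt_Suc)
    also have "\<dots> = (\<Sum>w\<in>?W. \<Sum>m\<in>?P. \<Sum>mn\<in>?Q. ?term w m mn)"
      by (subst sum.swap, subst (2) sum.swap, subst sum.swap) (rule refl)
    also have "\<dots> = (\<Sum>w\<in>?W. lambda_graph (V + 1) (E + k) (extend_graph V E k s w) (C(V + 1 := D)) z)"
      by (intro sum.cong refl) (simp only: lambda_graph_extend_graph[OF assms(1)])
    also have "\<dots> = (\<Sum>s'\<in>vertex_extensions V E k s. lambda_graph (V + 1) (E + k) s' (C(V + 1 := D)) z)"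
      by (rule sum.reindex_bij_betw[OF bij_betw_extend_graph[OF assms(1)]])
    finally show ?thesis .
  qed
  then show ?thesis
    unfolding edge_weight_def vertex_extensions_def by blast
qed

end
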